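(* Let $\mathcal{A}:\mathbb{C}^{m\times n}\to\mathbb{C}^p$ be linear with rank-restricted isometry constant $\delta_r(\mathcal{A})$. Let $X,Y\in\mathbb{C}^{m\times n}$ satisfy $\langle X,Y\rangle=\mathrm{tr}(Y^HX)=0$ and $\mathrm{rank}(X+\alpha Y)\le r$ for all $\alpha\in\mathbb{C}$. Then $|\langle\mathcal{A}X,\mathcal{A}Y\rangle|\le\sqrt2\,\delta_r(\mathcal{A})\|X\|_F\|Y\|_F$, where $\langle u,v\rangle=v^Hu$ on $\mathbb{C}^p$.
   Context: $\|\cdot\|_F$ is the Frobenius norm and $\|\cdot\|_2$ the Euclidean norm. $\delta_r(\mathcal{A})$ is the smallest $\delta\ge0$ such that $(1-\delta)\|X\|_F^2\le\|\mathcal{A}X\|_2^2\le(1+\delta)\|X\|_F^2$ for all $X$ with $\mathrm{rank}(X)\le r$. *)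

theory Defs
  imports "HOL-Analysis.Analysis"
begin

text \<open>Complex m x n matrices are rendered as \<open>complex^'n^'m\<close> (rows indexed by 'm,
  columns by 'n); vectors of \<open>\<complex>^p\<close> as \<open>complex^'p\<close>.  The rank is the library's
  \<open>rank\<close> (dimension of the row space over the scalar field, here \<complex>).\<close>

definition cmat_scale :: "complex \<Rightarrow> complex^'n^'m \<Rightarrow> complex^'n^'m" where
  "cmat_scale c X = (\<chi> i j. c * X $ i $ j)"

definition clinear_map :: "(complex^'n^'m \<Rightarrow> complex^'p) \<Rightarrow> bool" where
  "clinear_map A \<longleftrightarrow>
     (\<forall>X Y. A (X + Y) = A X + A Y) \<and> (\<forall>c X. A (cmat_scale c X) = c *s A X)"

definition cadj :: "complex^'n^'m \<Rightarrow> complex^'m^'n" where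
  "cadj Y = (\<chi> j i. cnj (Y $ i $ j))"

definition mat_inner :: "complex^'n^'m \<Rightarrow> complex^'n^'m \<Rightarrow> complex" where
  "mat_inner X Y = trace (cadj Y ** X)"

definition vec_inner :: "complex^'p \<Rightarrow> complex^'p \<Rightarrow> complex" where
  "vec_inner u v = (\<Sum>k\<in>UNIV. cnj (v $ k) * u $ k)"

definition frob_norm :: "complex^'n^'m \<Rightarrow> real" where
  "frob_norm X = sqrt (\<Sum>i\<in>UNIV. \<Sum>j\<in>UNIV. (cmod (X $ i $ j))\<^sup>2)"

definition vec_norm :: "complex^'p \<Rightarrow> real" where
  "vec_norm u = sqrt (\<Sum>k\<in>UNIV. (cmod (u $ k))\<^sup>2)"

definition rip_const :: "nat \<Rightarrow> (complex^'n^'m \<Rightarrow> complex^'p) \<Rightarrow> real" where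
  "rip_const r A = Inf {\<delta>. \<delta> \<ge> 0 \<and> (\<forall>X::complex^'n^'m. rank X \<le> r \<longrightarrow>
       (1 - \<delta>) * (frob_norm X)\<^sup>2 \<le> (vec_norm (A X))\<^sup>2 \<and>
       (vec_norm (A X))\<^sup>2 \<le> (1 + \<delta>) * (frob_norm X)\<^sup>2)}"

end

theory Submission
  imports Defs
begin

text \<open>Viewed as real inner product spaces, the Frobenius norm and \<open>Re \<langle>X,Y\<rangle>\<close> are the
  library's \<open>norm\<close> and \<open>inner\<close> on \<open>complex^'n^'m\<close>. Fix any admissible RIP constant
  \<open>\<delta>\<close> and replace \<open>Y\<close> by \<open>W = \<beta> Y\<close>, where \<open>|\<beta>| = \<parallel>X\<parallel>/\<parallel>Y\<parallel>\<close> and the phase of \<open>\<beta>\<close> is that of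
  \<open>\<langle>AX, AY\<rangle>\<close>, so that \<open>Re \<langle>AX, AW\<rangle> = |\<beta>| |\<langle>AX, AY\<rangle>|\<close>. Then \<open>X \<plusminus> W\<close> have rank at most
  \<open>r\<close> and squared norm \<open>2\<parallel>X\<parallel>\<^sup>2\<close>, and polarization
  \<open>4 Re \<langle>AX, AW\<rangle> = \<parallel>A(X+W)\<parallel>\<^sup>2 - \<parallel>A(X-W)\<parallel>\<^sup>2 \<le> 4\<delta>\<parallel>X\<parallel>\<^sup>2\<close> yields
  \<open>|\<langle>AX, AY\<rangle>| \<le> \<delta> \<parallel>X\<parallel> \<parallel>Y\<parallel>\<close>, which is even sharper than the claim by the factor \<open>\<surd>2\<close>.\<close>

lemma vec_norm_eq_norm: "vec_norm (u::complex^'p) = norm u"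
  by (simp add: vec_norm_def norm_vec_def L2_set_def)

lemma frob_norm_eq_norm: "frob_norm (X::complex^'n^'m) = norm X"
  by (simp add: frob_norm_def norm_vec_def L2_set_def sum_nonneg)

lemma Re_vec_inner: "Re (vec_inner (u::complex^'p) v) = inner u v"
  by (simp add: vec_inner_def inner_vec_def inner_complex_def Re_sum mult.commute)

lemma mat_inner_eq_sum:
  "mat_inner (X::complex^'n^'m) Y = (\<Sum>i\<in>UNIV. \<Sum>j\<in>UNIV. cnj (Y$i$j) * X$i$j)"
  unfolding mat_inner_def trace_def cadj_def matrix_matrix_mult_def
  by (simp add: sum.swap[of _ "UNIV::'m set"])

lemma Re_mat_inner: "Re (mat_inner (X::complex^'n^'m) Y) = inner X Y"
  by (simp add: mat_inner_eq_sum inner_vec_def inner_complex_def Re_sum mult.commute)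

lemma mat_inner_cmat_scale_right:
  "mat_inner (X::complex^'n^'m) (cmat_scale c Y) = cnj c * mat_inner X Y"
  by (simp add: mat_inner_eq_sum cmat_scale_def sum_distrib_left mult.assoc)

lemma vec_inner_scale_right: "vec_inner (u::complex^'p) (c *s v) = cnj c * vec_inner u v"
  by (simp add: vec_inner_def sum_distrib_left mult.assoc)

lemma norm_cmat_scale: "norm (cmat_scale c (X::complex^'n^'m)) = cmod c * norm X"
proof -
  have "frob_norm (cmat_scale c X) =
      sqrt ((cmod c)\<^sup>2 * (\<Sum>i\<in>UNIV. \<Sum>j\<in>UNIV. (cmod (X $ i $ j))\<^sup>2))"
    by (simp add: frob_norm_def cmat_scale_def norm_mult power_mult_distrib sum_distrib_left)
  then show ?thesis
    by (simp add: frob_norm_def real_sqrt_mult flip: frob_norm_eq_norm)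
qed

lemma cmat_scale_of_real: "cmat_scale (of_real a) X = a *\<^sub>R X"
  by (simp add: cmat_scale_def vec_eq_iff scaleR_conv_of_real[where 'a=complex])

lemma vector_smult_of_real: "of_real a *s (v::complex^'p) = a *\<^sub>R v"
  by (simp add: vec_eq_iff scaleR_conv_of_real[where 'a=complex])

lemma clinear_map_imp_linear:
  fixes A :: "complex^'n^'m \<Rightarrow> complex^'p"
  assumes "clinear_map A"
  shows "linear A"
proof
  fix x y show "A (x + y) = A x + A y"
    using assms by (simp add: clinear_map_def)
next
  fix a :: real and x :: "complex^'n^'m"
  show "A (a *\<^sub>R x) = a *\<^sub>R A x"
    using assms by (metis clinear_map_def cmat_scale_of_real vector_smult_of_real)
qed

lemma inner_le_of_polarization_bounds:
  fixes a b :: "'a::real_inner"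
  assumes "(norm (a + b))\<^sup>2 \<le> (1 + \<delta>) * s" and "(1 - \<delta>) * s \<le> (norm (a - b))\<^sup>2"
  shows "2 * inner a b \<le> \<delta> * s"
proof -
  have "(norm (a + b))\<^sup>2 - (norm (a - b))\<^sup>2 = 4 * inner a b"
    by (simp add: power2_norm_eq_inner inner_add_left inner_add_right inner_diff_left
        inner_diff_right inner_commute)
  with assms show ?thesis by (simp add: algebra_simps)
qed

lemma cnj_sgn_mult_self: "cnj (sgn z) * z = of_real (cmod z)"
proof -
  have "cnj z * z = of_real (cmod z) * of_real (cmod z)"
    using complex_norm_square[of z] by (simp add: power2_eq_square mult.commute)
  then show ?thesis
    by (cases "z = 0") (simp_all add: sgn_eq)
qed

lemma inner_sgn_vec_inner_smult:
  "inner u ((of_real t * sgn (vec_inner u v)) *s (v::complex^'p)) = t * cmod (vec_inner u v)"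
  using Re_vec_inner[of u "(of_real t * sgn (vec_inner u v)) *s v"]
  by (simp add: vec_inner_scale_right mult.assoc cnj_sgn_mult_self)

lemma le_Inf_mult:
  fixes S :: "real set"
  assumes "S \<noteq> {}" and "k \<ge> 0" and "\<And>\<delta>. \<delta> \<in> S \<Longrightarrow> c \<le> \<delta> * k" and "c \<ge> 0"
  shows "c \<le> Inf S * k"
proof (cases "k = 0")
  case True
  with assms show ?thesis by force
next
  case False
  then have "c / k \<le> Inf S"
    using assms by (intro cInf_greatest) (auto simp: divide_le_eq)
  with False assms(2) show ?thesis by (simp add: divide_le_eq)
qed

definition rip_bound :: "nat \<Rightarrow> (complex^'n^'m \<Rightarrow> complex^'p) \<Rightarrow> real \<Rightarrow> bool" where
  "rip_bound r A \<delta> \<longleftrightarrow> (\<forall>X::complex^'n^'m. rank X \<le> r \<longrightarrow>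
       (1 - \<delta>) * (frob_norm X)\<^sup>2 \<le> (vec_norm (A X))\<^sup>2 \<and>
       (vec_norm (A X))\<^sup>2 \<le> (1 + \<delta>) * (frob_norm X)\<^sup>2)"

lemma rip_const_eq_Inf: "rip_const r A = Inf {\<delta>. \<delta> \<ge> 0 \<and> rip_bound r A \<delta>}"
  by (simp add: rip_const_def rip_bound_def)

lemma rip_boundD:
  assumes "rip_bound r A \<delta>" and "rank X \<le> r"
  shows "(1 - \<delta>) * (norm X)\<^sup>2 \<le> (norm (A X))\<^sup>2"
    and "(norm (A X))\<^sup>2 \<le> (1 + \<delta>) * (norm X)\<^sup>2"
  using assms by (simp_all add: rip_bound_def vec_norm_eq_norm frob_norm_eq_norm)

lemma bounded_linear_rip_bound:
  fixes A :: "complex^'n^'m \<Rightarrow> complex^'p"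
  assumes "bounded_linear A"
  shows "\<exists>\<delta>\<ge>0. rip_bound r A \<delta>"
proof -
  obtain K where K: "\<And>x. norm (A x) \<le> norm x * K"
    using bounded_linear.bounded[OF assms] by blast
  have "rip_bound r A (1 + K\<^sup>2)"
  proof (unfold rip_bound_def vec_norm_eq_norm frob_norm_eq_norm, intro allI impI conjI)
    fix X :: "complex^'n^'m"
    show "(1 - (1 + K\<^sup>2)) * (norm X)\<^sup>2 \<le> (norm (A X))\<^sup>2"
    proof -
      have "(1 - (1 + K\<^sup>2)) * (norm X)\<^sup>2 \<le> 0" by simp
      also have "0 \<le> (norm (A X))\<^sup>2" by simp
      finally show ?thesis .
    qed
    have "(norm (A X))\<^sup>2 \<le> (norm X * K)\<^sup>2"
      using K[of X] by (simp add: power_mono)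
    also have "\<dots> \<le> (1 + (1 + K\<^sup>2)) * (norm X)\<^sup>2"
      by (simp add: power_mult_distrib algebra_simps)
    finally show "(norm (A X))\<^sup>2 \<le> (1 + (1 + K\<^sup>2)) * (norm X)\<^sup>2" .
  qed
  then show ?thesis by (intro exI[of _ "1 + K\<^sup>2"]) simp
qed

lemma cmod_vec_inner_le_rip_bound:
  fixes A :: "complex^'n^'m \<Rightarrow> complex^'p"
  assumes lin: "clinear_map A"
    and orth: "mat_inner X Y = 0"
    and rank_le: "\<forall>\<alpha>::complex. rank (X + cmat_scale \<alpha> Y) \<le> r"
    and rip: "rip_bound r A \<delta>" and "\<delta> \<ge> 0"
  shows "cmod (vec_inner (A X) (A Y)) \<le> \<delta> * norm X * norm Y"
proof (cases "X = 0 \<or> Y = 0")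
  case True
  have "A 0 = 0" using linear_0[OF clinear_map_imp_linear[OF lin]] .
  with True show ?thesis by (auto simp: vec_inner_def)
next
  case False
  define z where "z = vec_inner (A X) (A Y)"
  define t where "t = norm X / norm Y"
  define \<beta> where "\<beta> = of_real t * sgn z"
  define W where "W = cmat_scale \<beta> Y"
  have t_pos: "t > 0" using False by (simp add: t_def)
  have A_sum: "A (X + cmat_scale c Y) = A X + c *s A Y" for c
    using lin by (simp add: clinear_map_def)
  show ?thesis
  proof (cases "z = 0")
    case True
    then show ?thesis using \<open>\<delta> \<ge> 0\<close> by (simp add: z_def)
  next
    case z_nonzero: False
    have "cmod \<beta> = t"
      using z_nonzero t_pos by (simp add: \<beta>_def norm_mult norm_sgn)
    then have norm_W: "norm W = norm X"
      using False by (simp add: W_def norm_cmat_scale t_def)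
    have "inner X W = 0"
      using Re_mat_inner[of X W] by (simp add: W_def mat_inner_cmat_scale_right orth)
    then have norm_sum: "(norm (X + W))\<^sup>2 = 2 * (norm X)\<^sup>2"
      and norm_diff: "(norm (X - W))\<^sup>2 = 2 * (norm X)\<^sup>2"
      using dot_norm[of X W] dot_norm_neg[of X W] norm_W by simp_all
    have X_minus_W: "X - W = X + cmat_scale (- \<beta>) Y"
      by (simp add: W_def cmat_scale_def vec_eq_iff)
    have A_plus: "A (X + W) = A X + \<beta> *s A Y"
      by (simp add: W_def A_sum)
    have A_minus: "A (X - W) = A X - \<beta> *s A Y"
      by (simp add: X_minus_W A_sum vec_eq_iff)
    have "rank (X + W) \<le> r" "rank (X - W) \<le> r"
      using rank_le unfolding X_minus_W by (simp_all add: W_def)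
    then have "2 * inner (A X) (\<beta> *s A Y) \<le> \<delta> * (2 * (norm X)\<^sup>2)"
      using rip_boundD[OF rip] norm_sum norm_diff A_plus A_minus
      by (intro inner_le_of_polarization_bounds) metis+
    moreover have "inner (A X) (\<beta> *s A Y) = t * cmod z"
      by (simp add: \<beta>_def z_def inner_sgn_vec_inner_smult)
    ultimately have "t * cmod z \<le> \<delta> * (norm X)\<^sup>2"
      by simp
    then have "norm X * cmod z \<le> norm X * (\<delta> * norm X * norm Y)"
      using False by (simp add: t_def field_simps power2_eq_square)
    then show ?thesis
      using False by (simp add: z_def)
  qed
qed

theorem proposition5:
  fixes A :: "complex^'n^'m \<Rightarrow> complex^'p"
    and X Y :: "complex^'n^'m"
    and r :: nat
  assumes "clinear_map A"
    and "mat_inner X Y = 0"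
    and "\<forall>\<alpha>::complex. rank (X + cmat_scale \<alpha> Y) \<le> r"
  shows "cmod (vec_inner (A X) (A Y)) \<le> sqrt 2 * rip_const r A * frob_norm X * frob_norm Y"
proof -
  define S where "S = {\<delta>. \<delta> \<ge> 0 \<and> rip_bound r A \<delta>}"
  have "S \<noteq> {}"
    using bounded_linear_rip_bound clinear_map_imp_linear[OF assms(1)] linear_conv_bounded_linear
    by (fastforce simp: S_def)
  then have "Inf S \<ge> 0"
    by (intro cInf_greatest) (auto simp: S_def)
  have "cmod (vec_inner (A X) (A Y)) \<le> Inf S * (norm X * norm Y)"
    using \<open>S \<noteq> {}\<close> cmod_vec_inner_le_rip_bound[OF assms]
    by (intro le_Inf_mult) (auto simp: S_def mult.assoc)
  also have "\<dots> \<le> sqrt 2 * (Inf S * (norm X * norm Y))"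
    using mult_right_mono[of 1 "sqrt 2" "Inf S * (norm X * norm Y)"] \<open>Inf S \<ge> 0\<close> by simp
  finally show ?thesis
    by (simp add: rip_const_eq_Inf frob_norm_eq_norm mult.assoc flip: S_def)
qed

end
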